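(* Let $(X,d,\kappa)$ be a digital metric space with more than one point. Suppose there exist $x_0,y_0 \in X$ such that $d(x_0,y_0) = \min\{d(x,y) : x,y \in X,\ d(x,y) > 0\}$. Then there is no function $T: X \to X$ that is both onto and a digital expansive mapping.
   Context: A digital metric space is a triple $(X,d,\kappa)$ with $X\subset\mathbb{Z}^n$, $\kappa$ an adjacency relation on $X$, and $d$ a metric on $X$. A function $T: X \to X$ is a digital expansive mapping if there exists $k > 1$ such that $d(T(x),T(y)) \ge k\,d(x,y)$ for all $x,y \in X$. *)

theory Defs
  imports "HOL-Analysis.Analysis"
begin

text \<open>Points of Z^n are modelled as int ^ 'n (the dimension n is the cardinality of
the finite index type 'n).\<close>

definition adjacency_on :: "(int ^ 'n) set \<Rightarrow> (int ^ 'n \<Rightarrow> int ^ 'n \<Rightarrow> bool) \<Rightarrow> bool" where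
  "adjacency_on X \<kappa> \<longleftrightarrow>
     (\<forall>x y. \<kappa> x y \<longrightarrow> x \<in> X \<and> y \<in> X) \<and>
     (\<forall>x\<in>X. \<not> \<kappa> x x) \<and>
     (\<forall>x\<in>X. \<forall>y\<in>X. \<kappa> x y \<longrightarrow> \<kappa> y x)"

definition metric_on :: "'a set \<Rightarrow> ('a \<Rightarrow> 'a \<Rightarrow> real) \<Rightarrow> bool" where
  "metric_on X d \<longleftrightarrow>
     (\<forall>x\<in>X. \<forall>y\<in>X. 0 \<le> d x y) \<and>
     (\<forall>x\<in>X. \<forall>y\<in>X. d x y = 0 \<longleftrightarrow> x = y) \<and>
     (\<forall>x\<in>X. \<forall>y\<in>X. d x y = d y x) \<and>
     (\<forall>x\<in>X. \<forall>y\<in>X. \<forall>z\<in>X. d x z \<le> d x y + d y z)"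

definition digital_metric_space ::
  "(int ^ 'n) set \<Rightarrow> (int ^ 'n \<Rightarrow> int ^ 'n \<Rightarrow> real) \<Rightarrow> (int ^ 'n \<Rightarrow> int ^ 'n \<Rightarrow> bool) \<Rightarrow> bool" where
  "digital_metric_space X d \<kappa> \<longleftrightarrow> metric_on X d \<and> adjacency_on X \<kappa>"

definition digital_expansive ::
  "'a set \<Rightarrow> ('a \<Rightarrow> 'a \<Rightarrow> real) \<Rightarrow> ('a \<Rightarrow> 'a) \<Rightarrow> bool" where
  "digital_expansive X d T \<longleftrightarrow>
     T ` X \<subseteq> X \<and> (\<exists>k::real. k > 1 \<and> (\<forall>x\<in>X. \<forall>y\<in>X. d (T x) (T y) \<ge> k * d x y))"

end

theory Submission
  imports Defs
begin

text \<open>Pulling a pair of points at minimal positive distance back along a surjective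
expansive map gives a pair at positive distance at most \<open>1/k\<close> times that minimum,
which is strictly smaller.\<close>

lemma metric_on_pos_dist_iff:
  assumes "metric_on X d" and "x \<in> X" and "y \<in> X"
  shows "0 < d x y \<longleftrightarrow> x \<noteq> y"
proof -
  have "0 \<le> d x y" and "d x y = 0 \<longleftrightarrow> x = y"
    using assms unfolding metric_on_def by simp_all
  then show ?thesis
    by linarith
qed

lemma surj_expansive_shrinks_positive_distance:
  assumes "metric_on X d" and "T ` X = X" and "digital_expansive X d T"
    and "x \<in> X" and "y \<in> X" and "0 < d x y"
  obtains a b where "a \<in> X" and "b \<in> X" and "0 < d a b" and "d a b < d x y"
proof -
  obtain k where "k > 1" and expand: "\<forall>a\<in>X. \<forall>b\<in>X. k * d a b \<le> d (T a) (T b)"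
    using assms(3) unfolding digital_expansive_def by blast
  have "x \<in> T ` X" and "y \<in> T ` X"
    using assms(2,4,5) by simp_all
  then obtain a b where a: "x = T a" "a \<in> X" and b: "y = T b" "b \<in> X"
    by (elim imageE)
  have "x \<noteq> y"
    using metric_on_pos_dist_iff[OF assms(1,4,5)] assms(6) by simp
  then have pos: "0 < d a b"
    using metric_on_pos_dist_iff[OF assms(1) a(2) b(2)] a(1) b(1) by auto
  have "k * d a b \<le> d x y"
    using expand a b by simp
  moreover have "d a b < k * d a b"
    using \<open>k > 1\<close> pos by simp
  ultimately have "d a b < d x y"
    by linarith
  with a(2) b(2) pos show thesis
    by (rule that)
qed

theorem mainTheorem9:
  fixes X :: "(int ^ 'n) set"
    and d :: "int ^ 'n \<Rightarrow> int ^ 'n \<Rightarrow> real"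
    and \<kappa> :: "int ^ 'n \<Rightarrow> int ^ 'n \<Rightarrow> bool"
    and x0 y0 :: "int ^ 'n"
  assumes "digital_metric_space X d \<kappa>"
    and "\<exists>x\<in>X. \<exists>y\<in>X. x \<noteq> y"
    and "x0 \<in> X" and "y0 \<in> X"
    and "d x0 y0 > 0"
    and "\<forall>x\<in>X. \<forall>y\<in>X. d x y > 0 \<longrightarrow> d x0 y0 \<le> d x y"
  shows "\<not> (\<exists>T. T ` X = X \<and> digital_expansive X d T)"
proof
  have "metric_on X d"
    using assms(1) unfolding digital_metric_space_def by blast
  assume "\<exists>T. T ` X = X \<and> digital_expansive X d T"
  then obtain T where "T ` X = X" and "digital_expansive X d T"
    by blast
  with \<open>metric_on X d\<close> obtain a b where "a \<in> X" "b \<in> X" "0 < d a b" "d a b < d x0 y0"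
    using assms(3-5) by (rule surj_expansive_shrinks_positive_distance)
  then show False
    using assms(6) by fastforce
qed

end
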